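(* Let $X$ be a non-trivial separated locally convex space with topology $\sigma(X,X^* )$, $T$ an arbitrary index set, $f,g,h_t:X\to\overline{\mathbb{R}}$ ($t\in T$) proper convex functions, $A=\{x\in X:h_t(x)\le0\ \forall t\in T\}$, and $(P)$ the problem $\inf_{x\in A}\{f(x)-g(x)\}$. Let $B:=\{0\}\times\{0\}\times\,]0,+\infty[\,\times\mathbb{R}\subseteq W\times\mathbb{R}$. If $v(P)\in\mathbb{R}$, then $$\operatorname{epi}(f-g+\delta_A)^c\cap B=\{(0,0,\delta,\beta):\delta>0,\ \beta\ge -v(P)\}=\bigcap_{x\in X}\operatorname{epi}\big(c'(\cdot,x)-v(P)\big).$$ Consequently, $\operatorname{epi}(f-g+\delta_A)^c\cap B$ is an e$'$-convex set.
   Context: $X^*$ is the topological dual of $X$, $\langle x,x^*\rangle$ the pairing, $W:=X^*\times X^*\times\mathbb{R}$. The coupling $c:X\times W\to\overline{\mathbb{R}}$ is $c(x,(x^*,y^*,\alpha))=\langle x,x^*\rangle$ if $\langle x,y^*\rangle<\alpha$ and $+\infty$ otherwise; $c'((x^*,y^*,\alpha),x):=c(x,(x^*,y^*,\alpha))$. For $\varphi:X\to\overline{\mathbb{R}}$, $\varphi^c(w):=\sup_{x\in X}\{c(x,w)-\varphi(x)\}$, with the convention $(+\infty)+(-\infty)=(-\infty)+(+\infty)=(+\infty)-(+\infty)=(-\infty)-(-\infty)=-\infty$. $\delta_A$ is the indicator of $A$ ($0$ on $A$, $+\infty$ elsewhere); by convention $f(x)-g(x)=+\infty$ for $x\notin\operatorname{dom}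 f$. For $\psi:W\to\overline{\mathbb{R}}$, $\operatorname{epi}\psi=\{(w,\beta)\in W\times\mathbb{R}:\psi(w)\le\beta\}$. A function $k:W\to\overline{\mathbb{R}}$ is e$'$-convex if it is convex and is the pointwise supremum of a family of functions of the form $c'(\cdot,x)-\beta$ with $x\in X$, $\beta\in\mathbb{R}$. A set $D\subseteq W\times\mathbb{R}$ is e$'$-convex if $D=\operatorname{epi}k$ for some e$'$-convex function $k$. $v(P)$ is the optimal value of $(P)$. *)

theory Defs
  imports "HOL-Analysis.Analysis" "HOL-Library.Extended_Real"
begin

text \<open>The space X is a real vector space 'a; its topological dual X* is modelled as a
  set D of linear functionals on 'a (X carries sigma(X,X*), whose dual is exactly D).\<close>

definition dual_pair :: "('a::real_vector \<Rightarrow> real) set \<Rightarrow> bool" where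
  "dual_pair D \<longleftrightarrow> (\<forall>\<phi>\<in>D. linear \<phi>) \<and> (\<lambda>_. 0) \<in> D
     \<and> (\<forall>\<phi>\<in>D. \<forall>\<psi>\<in>D. (\<lambda>x. \<phi> x + \<psi> x) \<in> D)
     \<and> (\<forall>\<phi>\<in>D. \<forall>r::real. (\<lambda>x. r * \<phi> x) \<in> D)"

text \<open>Hausdorff (separated) for sigma(X,X*): the dual separates points.\<close>
definition separating :: "('a::real_vector \<Rightarrow> real) set \<Rightarrow> bool" where
  "separating D \<longleftrightarrow> (\<forall>x::'a. x \<noteq> 0 \<longrightarrow> (\<exists>\<phi>\<in>D. \<phi> x \<noteq> 0))"

type_synonym 'a W = "('a \<Rightarrow> real) \<times> ('a \<Rightarrow> real) \<times> real"

definition Wset :: "('a \<Rightarrow> real) set \<Rightarrow> 'a W set" where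
  "Wset D = D \<times> D \<times> UNIV"

definition coupling :: "'a \<Rightarrow> 'a W \<Rightarrow> ereal" where
  "coupling x w = (case w of (xs, ys, \<alpha>) \<Rightarrow> if ys x < \<alpha> then ereal (xs x) else \<infinity>)"

definition coupling' :: "'a W \<Rightarrow> 'a \<Rightarrow> ereal" where
  "coupling' w x = coupling x w"

definition esub :: "ereal \<Rightarrow> ereal \<Rightarrow> ereal" where
  "esub a b = (if (a = \<infinity> \<and> b = \<infinity>) \<or> (a = -\<infinity> \<and> b = -\<infinity>) then -\<infinity> else a - b)"

definition eadd :: "ereal \<Rightarrow> ereal \<Rightarrow> ereal" where
  "eadd a b = (if (a = \<infinity> \<and> b = -\<infinity>) \<or> (a = -\<infinity> \<and> b = \<infinity>) then \<infinity> else a + b)"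

definition cconj :: "('a \<Rightarrow> ereal) \<Rightarrow> 'a W \<Rightarrow> ereal" where
  "cconj \<phi> w = (SUP x. esub (coupling x w) (\<phi> x))"

definition indicator_e :: "'a set \<Rightarrow> 'a \<Rightarrow> ereal" where
  "indicator_e A x = (if x \<in> A then 0 else \<infinity>)"

definition fdiff :: "('a \<Rightarrow> ereal) \<Rightarrow> ('a \<Rightarrow> ereal) \<Rightarrow> 'a \<Rightarrow> ereal" where
  "fdiff f g x = (if f x = \<infinity> then \<infinity> else esub (f x) (g x))"

definition objP :: "('a \<Rightarrow> ereal) \<Rightarrow> ('a \<Rightarrow> ereal) \<Rightarrow> 'a set \<Rightarrow> 'a \<Rightarrow> ereal" where
  "objP f g A x = eadd (fdiff f g x) (indicator_e A x)"

definition valP :: "('a \<Rightarrow> ereal) \<Rightarrow> ('a \<Rightarrow> ereal) \<Rightarrow> 'a set \<Rightarrow> ereal" where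
  "valP f g A = (INF x\<in>A. fdiff f g x)"

definition proper_convex :: "('a::real_vector \<Rightarrow> ereal) \<Rightarrow> bool" where
  "proper_convex f \<longleftrightarrow> (\<forall>x. f x \<noteq> -\<infinity>) \<and> (\<exists>x. f x \<noteq> \<infinity>)
     \<and> convex {(x, t::real). f x \<le> ereal t}"

definition epiW :: "('a \<Rightarrow> real) set \<Rightarrow> ('a W \<Rightarrow> ereal) \<Rightarrow> ('a W \<times> real) set" where
  "epiW D \<psi> = {(w, \<beta>). w \<in> Wset D \<and> \<psi> w \<le> ereal \<beta>}"

definition wcomb :: "real \<Rightarrow> 'a W \<Rightarrow> 'a W \<Rightarrow> 'a W" where
  "wcomb l w1 w2 = (case w1 of (a1, b1, r1) \<Rightarrow> case w2 of (a2, b2, r2) \<Rightarrow>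
     ((\<lambda>x. l * a1 x + (1 - l) * a2 x), (\<lambda>x. l * b1 x + (1 - l) * b2 x), l * r1 + (1 - l) * r2))"

definition convex_W :: "('a \<Rightarrow> real) set \<Rightarrow> ('a W \<Rightarrow> ereal) \<Rightarrow> bool" where
  "convex_W D k \<longleftrightarrow> (\<forall>w1\<in>Wset D. \<forall>w2\<in>Wset D. \<forall>l b1 b2. 0 \<le> l \<longrightarrow> l \<le> 1 \<longrightarrow>
      k w1 \<le> ereal b1 \<longrightarrow> k w2 \<le> ereal b2 \<longrightarrow>
      k (wcomb l w1 w2) \<le> ereal (l * b1 + (1 - l) * b2))"

definition e'_convex_fun :: "('a \<Rightarrow> real) set \<Rightarrow> ('a W \<Rightarrow> ereal) \<Rightarrow> bool" where
  "e'_convex_fun D k \<longleftrightarrow> convex_W D k \<and>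
     (\<exists>F :: ('a \<times> real) set. \<forall>w\<in>Wset D. k w = (SUP (x, \<beta>)\<in>F. coupling' w x - ereal \<beta>))"

definition e'_convex_set :: "('a \<Rightarrow> real) set \<Rightarrow> ('a W \<times> real) set \<Rightarrow> bool" where
  "e'_convex_set D S \<longleftrightarrow> (\<exists>k. e'_convex_fun D k \<and> S = epiW D k)"

definition Bset :: "('a W \<times> real) set" where
  "Bset = {(((\<lambda>_. 0), (\<lambda>_. 0), \<delta>), \<beta>) | \<delta> \<beta>. \<delta> > 0}"

end

theory Submission
  imports Defs
begin

text \<open>On the slice B the coupling vanishes, so the c-conjugate of any function there is
  minus its infimum; for the objective of (P) this is -v(P).  Conversely, a point of W lies
  below every c'(-,x) - v(P) only if both of its functionals are bounded above on X, hence
  zero, which pins down the same set.  That set is the epigraph of the supremum of the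
  functions c'(-,x) - v(P); each of them has an epigraph cut out by one open and one closed
  half-space, so the supremum is convex and therefore e'-convex.\<close>

definition Bset_ge :: "real \<Rightarrow> ('a W \<times> real) set" where
  "Bset_ge r = {(((\<lambda>_. 0), (\<lambda>_. 0), \<delta>), \<beta>) | \<delta> \<beta>. \<delta> > 0 \<and> \<beta> \<ge> - r}"

lemma linear_bounded_above_eq_zero:
  fixes b :: "'a::real_vector \<Rightarrow> real"
  assumes "linear b" and bounded: "\<And>x. b x \<le> c"
  shows "b = (\<lambda>_. 0)"
proof
  fix x show "b x = 0"
  proof (rule ccontr)
    assume nz: "b x \<noteq> 0"
    have "b (((\<bar>c\<bar> + 1) / b x) *\<^sub>R x) = \<bar>c\<bar> + 1"
      using nz \<open>linear b\<close> by (simp add: linear_scale)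
    with bounded[of "((\<bar>c\<bar> + 1) / b x) *\<^sub>R x"] show False by linarith
  qed
qed

lemma coupling'_minus_le_iff:
  "coupling' (a, b, \<alpha>) x - ereal \<beta> \<le> ereal c \<longleftrightarrow> b x < \<alpha> \<and> a x \<le> c + \<beta>"
  by (auto simp: coupling'_def coupling_def)

lemma coupling'_minus_le_everywhere_iff:
  fixes a b :: "'a::real_vector \<Rightarrow> real"
  assumes "linear a" and "linear b"
  shows "(\<forall>x. coupling' (a, b, \<alpha>) x - ereal r \<le> ereal \<beta>) \<longleftrightarrow>
         a = (\<lambda>_. 0) \<and> b = (\<lambda>_. 0) \<and> \<alpha> > 0 \<and> - r \<le> \<beta>"
proof
  assume "\<forall>x. coupling' (a, b, \<alpha>) x - ereal r \<le> ereal \<beta>"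
  then have le: "b x < \<alpha>" "a x \<le> \<beta> + r" for x
    by (simp_all add: coupling'_minus_le_iff)
  have "a = (\<lambda>_. 0)" "b = (\<lambda>_. 0)"
    using linear_bounded_above_eq_zero assms le less_imp_le by metis+
  with le[of 0] show "a = (\<lambda>_. 0) \<and> b = (\<lambda>_. 0) \<and> \<alpha> > 0 \<and> - r \<le> \<beta>" by simp
qed (simp add: coupling'_minus_le_iff)

lemma Inter_epiW_coupling'_eq_Bset_ge:
  assumes "dual_pair D"
  shows "(\<Inter>x. epiW D (\<lambda>w. coupling' w x - ereal r)) = Bset_ge r"
proof -
  have lin: "\<forall>\<phi>\<in>D. linear \<phi>" and zero: "(\<lambda>_. 0) \<in> D"
    using assms by (simp_all add: dual_pair_def)
  have "((a, b, \<alpha>), \<beta>) \<in> (\<Inter>x. epiW D (\<lambda>w. coupling' w x - ereal r)) \<longleftrightarrow>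
        ((a, b, \<alpha>), \<beta>) \<in> Bset_ge r" for a b \<alpha> \<beta>
    using coupling'_minus_le_everywhere_iff[of a b \<alpha> r \<beta>] lin zero
    by (auto simp: epiW_def Wset_def Bset_ge_def)
  then show ?thesis by (intro set_eqI) (metis prod.exhaust)
qed

lemma cconj_vertical:
  assumes "\<delta> > 0"
  shows "cconj \<phi> ((\<lambda>_. 0), (\<lambda>_. 0), \<delta>) = - (INF x. \<phi> x)"
proof -
  have "esub (coupling x ((\<lambda>_. 0), (\<lambda>_. 0), \<delta>)) (\<phi> x) = - \<phi> x" for x
    using assms by (cases "\<phi> x") (simp_all add: coupling_def esub_def)
  then show ?thesis by (simp add: cconj_def ereal_SUP_uminus_eq)
qed

lemma epiW_cconj_Int_Bset:
  assumes "dual_pair D" and "(INF x. \<phi> x) = ereal r"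
  shows "epiW D (cconj \<phi>) \<inter> Bset = Bset_ge r"
proof -
  have "(\<lambda>_. 0) \<in> D" using assms(1) by (simp add: dual_pair_def)
  then show ?thesis
    using cconj_vertical[of _ \<phi>] assms(2)
    by (auto simp: epiW_def Wset_def Bset_def Bset_ge_def)
qed

lemma INF_objP_eq_valP: "(INF x. objP f g A x) = valP f g A"
proof (rule antisym)
  have "objP f g A x = fdiff f g x" if "x \<in> A" for x
    using that by (simp add: objP_def eadd_def indicator_e_def)
  then show "(INF x. objP f g A x) \<le> valP f g A"
    unfolding valP_def by (metis INF_greatest INF_lower UNIV_I)
  have "valP f g A \<le> objP f g A x" for x
    by (cases "x \<in> A") (auto simp: valP_def objP_def eadd_def indicator_e_def intro: INF_lower)
  then show "valP f g A \<le> (INF x. objP f g A x)"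
    by (rule INF_greatest)
qed

lemma convex_W_SUP_coupling':
  "convex_W D (\<lambda>w. SUP (x, \<gamma>)\<in>F. coupling' w x - ereal \<gamma>)"
  unfolding convex_W_def
proof (intro ballI allI impI)
  fix w1 w2 and l b1 b2 :: real
  assume "0 \<le> l" "l \<le> 1"
    and le1: "(SUP (x, \<gamma>)\<in>F. coupling' w1 x - ereal \<gamma>) \<le> ereal b1"
    and le2: "(SUP (x, \<gamma>)\<in>F. coupling' w2 x - ereal \<gamma>) \<le> ereal b2"
  obtain a1 c1 \<alpha>1 a2 c2 \<alpha>2 where w: "w1 = (a1, c1, \<alpha>1)" "w2 = (a2, c2, \<alpha>2)"
    by (metis prod.exhaust)
  have "coupling' (wcomb l w1 w2) x - ereal \<gamma> \<le> ereal (l * b1 + (1 - l) * b2)"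
    if "(x, \<gamma>) \<in> F" for x \<gamma>
  proof -
    from that le1 le2 have "c1 x < \<alpha>1" "a1 x \<le> b1 + \<gamma>" "c2 x < \<alpha>2" "a2 x \<le> b2 + \<gamma>"
      by (fastforce simp: w SUP_le_iff coupling'_minus_le_iff)+
    moreover have "l * c1 x + (1 - l) * c2 x < l * \<alpha>1 + (1 - l) * \<alpha>2"
    proof (cases "l = 0")
      case False
      with calculation \<open>0 \<le> l\<close> \<open>l \<le> 1\<close> show ?thesis
        by (intro add_less_le_mono mult_strict_left_mono mult_left_mono) auto
    qed (use calculation in simp)
    moreover have "l * a1 x + (1 - l) * a2 x \<le> l * (b1 + \<gamma>) + (1 - l) * (b2 + \<gamma>)"
      using calculation \<open>0 \<le> l\<close> \<open>l \<le> 1\<close> by (intro add_mono mult_left_mono) auto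
    ultimately show ?thesis
      by (simp add: w wcomb_def coupling'_minus_le_iff algebra_simps)
  qed
  then show "(SUP (x, \<gamma>)\<in>F. coupling' (wcomb l w1 w2) x - ereal \<gamma>)
               \<le> ereal (l * b1 + (1 - l) * b2)"
    by (auto simp: SUP_le_iff)
qed

lemma e'_convex_set_Inter_epiW_coupling':
  fixes D :: "('a \<Rightarrow> real) set"
  shows "e'_convex_set D (\<Inter>x. epiW D (\<lambda>w. coupling' w x - ereal r))"
proof -
  define k :: "'a W \<Rightarrow> ereal"
    where "k w = (SUP (x, \<gamma>)\<in>UNIV \<times> {r}. coupling' w x - ereal \<gamma>)" for w
  have "e'_convex_fun D k"
    unfolding e'_convex_fun_def k_def using convex_W_SUP_coupling' by blast
  moreover have "epiW D k = (\<Inter>x. epiW D (\<lambda>w. coupling' w x - ereal r))"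
    by (auto simp: epiW_def k_def SUP_le_iff)
  ultimately show ?thesis
    unfolding e'_convex_set_def by metis
qed

text \<open>Only the duality and the finiteness of v(P) are used: on B the conjugate sees nothing
  of f, g or A beyond the optimal value.\<close>

theorem lemma4p7:
  fixes D :: "('a::real_vector \<Rightarrow> real) set"
    and f g :: "'a \<Rightarrow> ereal"
    and h :: "'i \<Rightarrow> 'a \<Rightarrow> ereal"
    and T :: "'i set"
    and A :: "'a set"
    and r :: real
  assumes "dual_pair D" and "separating D"
    and "\<exists>x::'a. x \<noteq> 0"
    and "proper_convex f" and "proper_convex g"
    and "\<forall>t\<in>T. proper_convex (h t)"
    and "A = {x. \<forall>t\<in>T. h t x \<le> 0}"
    and "valP f g A = ereal r"
  shows "epiW D (cconj (objP f g A)) \<inter> Bset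
           = {(((\<lambda>_. 0), (\<lambda>_. 0), \<delta>), \<beta>) | \<delta> \<beta>. \<delta> > 0 \<and> \<beta> \<ge> - r}
       \<and> {(((\<lambda>_. 0), (\<lambda>_. 0), \<delta>), \<beta>) | \<delta> \<beta>. \<delta> > 0 \<and> \<beta> \<ge> - r}
           = (\<Inter>x. epiW D (\<lambda>w. coupling' w x - ereal r))
       \<and> e'_convex_set D (epiW D (cconj (objP f g A)) \<inter> Bset)"
proof -
  have slice: "epiW D (cconj (objP f g A)) \<inter> Bset = Bset_ge r"
    using epiW_cconj_Int_Bset \<open>dual_pair D\<close> INF_objP_eq_valP \<open>valP f g A = ereal r\<close>
    by metis
  have inter: "Bset_ge r = (\<Inter>x. epiW D (\<lambda>w. coupling' w x - ereal r))"
    using Inter_epiW_coupling'_eq_Bset_ge[OF \<open>dual_pair D\<close>] by simp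
  show ?thesis
    using slice inter e'_convex_set_Inter_epiW_coupling'[of D r]
    by (simp add: Bset_ge_def)
qed

end
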